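(* Let $C$ be a closed convex subset of a Banach space and let $T:C\to C$ be nonexpansive. Suppose that for some $\alpha\in(0,1)$ the mapping $F=(I-\alpha T)^{-1}(1-\alpha)I:C\to C$ satisfies $F(D)=D$ for some nonempty bounded set $D\subset C$. Then $T$ has a fixed point.
   Context: $T$ nonexpansive means $\|Tx-Ty\|\le\|x-y\|$ for all $x,y\in C$. For $x\in C$, $Fx$ is the unique point $y\in C$ satisfying $y-\alpha Ty=(1-\alpha)x$ (equivalently, $y=\alpha Ty+(1-\alpha)x$), which exists and is unique by the Banach contraction principle. *)

theory Defs
  imports "HOL-Analysis.Analysis"
begin

definition nonexpansive_on :: "'a::real_normed_vector set \<Rightarrow> ('a \<Rightarrow> 'a) \<Rightarrow> bool" where
  "nonexpansive_on C T \<longleftrightarrow> (\<forall>x\<in>C. \<forall>y\<in>C. norm (T x - T y) \<le> norm (x - y))"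

text \<open>The resolvent-type map F = (I - alpha T)^{-1} (1 - alpha) I on C:
  F x is the unique y in C with y = alpha T y + (1 - alpha) x.\<close>
definition resolvent_map :: "'a::real_normed_vector set \<Rightarrow> ('a \<Rightarrow> 'a) \<Rightarrow> real \<Rightarrow> 'a \<Rightarrow> 'a" where
  "resolvent_map C T \<alpha> x = (THE y. y \<in> C \<and> y = \<alpha> *\<^sub>R T y + (1 - \<alpha>) *\<^sub>R x)"

end

theory Submission imports Defs begin

text \<open>With \<open>S = T \<circ> F\<close> the defining equation reads \<open>F x = (1 - \<alpha>) x + \<alpha> S x\<close>: \<open>F\<close> is the
  averaged map of the nonexpansive map \<open>S\<close>, and a fixed point of \<open>S\<close> is fixed by \<open>F\<close> and hence by \<open>T\<close>.
  As \<open>F\<close> maps \<open>D\<close> onto \<open>D\<close>, there is a bounded backward orbit \<open>y\<^sub>k = F y\<^sub>k\<^sub>+\<^sub>1\<close> in \<open>D\<close>.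
  Averaging does not increase the displacement \<open>\<parallel>S y - y\<parallel>\<close>, so the displacements along the
  backward orbit increase and converge. The Goebel--Kirk inequality for the finite forward orbit
  \<open>y\<^sub>m\<^sub>+\<^sub>n, \<dots>, y\<^sub>m\<close> bounds \<open>(1 + n \<alpha>)\<parallel>S y\<^sub>0 - y\<^sub>0\<parallel>\<close> by \<open>\<parallel>S y\<^sub>m - y\<^sub>m\<^sub>+\<^sub>n\<parallel>\<close>, which is bounded, plus
  \<open>(1 - \<alpha>)\<^sup>-\<^sup>n\<close> times a displacement increment that vanishes as \<open>m \<rightarrow> \<infinity>\<close>; letting \<open>n \<rightarrow> \<infinity>\<close>
  gives \<open>S y\<^sub>0 = y\<^sub>0\<close>.\<close>

lemma nonexpansive_onD:
  "nonexpansive_on C T \<Longrightarrow> x \<in> C \<Longrightarrow> y \<in> C \<Longrightarrow> norm (T x - T y) \<le> norm (x - y)"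
  unfolding nonexpansive_on_def by blast

lemma nonexpansive_on_comp:
  assumes "nonexpansive_on A f" "f ` A \<subseteq> B" "nonexpansive_on B g"
  shows "nonexpansive_on A (g \<circ> f)"
  unfolding nonexpansive_on_def comp_def
proof (intro ballI)
  fix x z
  assume "x \<in> A" "z \<in> A"
  then have "norm (g (f x) - g (f z)) \<le> norm (f x - f z)" "norm (f x - f z) \<le> norm (x - z)"
    using assms by (auto intro: nonexpansive_onD)
  then show "norm (g (f x) - g (f z)) \<le> norm (x - z)"
    by linarith
qed

lemma averaged_map_displacement_le:
  fixes S :: "'a::real_normed_vector \<Rightarrow> 'a"
  assumes "0 \<le> t" "t \<le> 1" "nonexpansive_on A S" "a \<in> A" "b \<in> A"
    and b: "b = (1 - t) *\<^sub>R a + t *\<^sub>R S a"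
  shows "norm (S b - b) \<le> norm (S a - a)"
proof -
  have "b - a = t *\<^sub>R (S a - a)"
    by (simp add: b algebra_simps)
  then have "norm (S b - S a) \<le> t * norm (S a - a)"
    using nonexpansive_onD[OF assms(3,5,4)] assms(1) by simp
  moreover have "norm (S b - b) \<le> norm (S b - S a) + (1 - t) * norm (S a - a)"
  proof -
    have "S b - b = (S b - S a) + (1 - t) *\<^sub>R (S a - a)"
      by (simp add: b algebra_simps)
    then have "norm (S b - b) \<le> norm (S b - S a) + norm ((1 - t) *\<^sub>R (S a - a))"
      by (metis norm_triangle_ineq)
    then show ?thesis
      using assms(2) by simp
  qed
  moreover have "t * norm (S a - a) + (1 - t) * norm (S a - a) = norm (S a - a)"
    by (simp add: algebra_simps)
  ultimately show ?thesis
    by linarith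
qed

lemma one_plus_mult_le_inverse_power:
  fixes t :: real
  assumes "0 \<le> t" "t < 1"
  shows "1 + real n * t \<le> (1 / (1 - t)) ^ n"
proof -
  have "1 + real n * t \<le> 1 + real n * (t / (1 - t))"
    using assms by (simp add: field_simps mult_left_mono)
  also have "\<dots> \<le> (1 + t / (1 - t)) ^ n"
  proof (rule Bernoulli_inequality)
    have "0 \<le> t / (1 - t)"
      using assms by simp
    then show "-1 \<le> t / (1 - t)"
      by linarith
  qed
  also have "1 + t / (1 - t) = 1 / (1 - t)"
    using assms(2) by (simp add: field_simps)
  finally show ?thesis .
qed

lemma surj_on_backward_orbit:
  assumes "f ` D = D" "x \<in> D"
  obtains y where "y 0 = x" "\<And>k. y k \<in> D" "\<And>k. f (y (Suc k)) = y k"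
proof -
  have "\<forall>z\<in>D. \<exists>x. x \<in> D \<and> f x = z"
  proof
    fix z
    assume "z \<in> D"
    then have "z \<in> f ` D"
      by (simp only: assms(1))
    then show "\<exists>x. x \<in> D \<and> f x = z"
      by blast
  qed
  from bchoice[OF this] obtain g where g: "\<forall>z\<in>D. g z \<in> D \<and> f (g z) = z" ..
  define y where "y k = (g ^^ k) x" for k
  have y_in: "y k \<in> D" for k
    by (induction k) (simp_all add: y_def assms(2) g)
  show ?thesis
  proof (rule that)
    show "y 0 = x"
      by (simp add: y_def)
    show "y k \<in> D" "f (y (Suc k)) = y k" for k
      using y_in g y_in[of k] by (simp_all add: y_def)
  qed
qed

locale averaged_backward_orbit =
  fixes A :: "'a::real_normed_vector set" and S :: "'a \<Rightarrow> 'a" and t :: real and y :: "nat \<Rightarrow> 'a"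
  assumes t_pos: "0 < t" and t_less_1: "t < 1"
    and nonexpansive: "nonexpansive_on A S"
    and orbit_in: "y k \<in> A"
    and orbit_step: "y k = (1 - t) *\<^sub>R y (Suc k) + t *\<^sub>R S (y (Suc k))"
begin

definition displacement :: "nat \<Rightarrow> real" where
  "displacement k = norm (S (y k) - y k)"

lemma displacement_nonneg: "0 \<le> displacement k"
  by (simp add: displacement_def)

lemma incseq_displacement: "incseq displacement"
proof (rule incseq_SucI)
  fix k
  show "displacement k \<le> displacement (Suc k)"
    unfolding displacement_def
    using t_pos t_less_1
    by (intro averaged_map_displacement_le[OF _ _ nonexpansive orbit_in orbit_in orbit_step[of k]]) auto
qed

lemma norm_orbit_step: "norm (y k - y (Suc k)) = t * displacement (Suc k)"
proof -
  have "y k - y (Suc k) = t *\<^sub>R (S (y (Suc k)) - y (Suc k))"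
    by (subst orbit_step) (simp add: algebra_simps)
  then show ?thesis
    using t_pos by (simp add: displacement_def)
qed

lemma norm_orbit_diff_le: "norm (y m - y (m + j)) \<le> real j * t * displacement (m + j)"
proof (induction j)
  case 0
  then show ?case by simp
next
  case (Suc j)
  have "norm (y m - y (m + Suc j)) \<le> norm (y m - y (m + j)) + norm (y (m + j) - y (Suc (m + j)))"
    using norm_triangle_ineq[of "y m - y (m + j)" "y (m + j) - y (Suc (m + j))"] by simp
  also have "\<dots> \<le> real j * t * displacement (m + Suc j) + t * displacement (m + Suc j)"
  proof -
    have "displacement (m + j) \<le> displacement (m + Suc j)"
      using incseq_displacement by (simp add: incseq_def)
    then have "real j * t * displacement (m + j) \<le> real j * t * displacement (m + Suc j)"
      using t_pos by (simp add: mult_left_mono)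
    then show ?thesis
      using Suc.IH norm_orbit_step[of "m + j"] by simp
  qed
  finally show ?case
    by (simp add: algebra_simps)
qed

lemma norm_S_orbit_diff_le:
  "norm (S (y m) - y (m + n))
     \<le> (1 - t) * norm (S (y m) - y (m + Suc n)) + t * (real (Suc n) * t * displacement (m + Suc n))"
proof -
  let ?N = "m + Suc n"
  have "S (y m) - y (m + n) = (1 - t) *\<^sub>R (S (y m) - y ?N) + t *\<^sub>R (S (y m) - S (y ?N))"
    by (subst orbit_step) (simp add: algebra_simps)
  then have "norm (S (y m) - y (m + n)) \<le> (1 - t) * norm (S (y m) - y ?N) + t * norm (S (y m) - S (y ?N))"
    using t_pos t_less_1
    by (metis abs_of_nonneg abs_of_pos diff_ge_0_iff_ge less_imp_le norm_scaleR norm_triangle_ineq)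
  also have "norm (S (y m) - S (y ?N)) \<le> norm (y m - y ?N)"
    using nonexpansive orbit_in orbit_in by (rule nonexpansive_onD)
  also have "norm (y m - y ?N) \<le> real (Suc n) * t * displacement ?N"
    by (rule norm_orbit_diff_le)
  finally show ?thesis
    using t_pos by (simp add: mult_left_mono)
qed

lemma goebel_kirk_inequality:
  "(1 + real n * t) * displacement (m + n)
     \<le> norm (S (y m) - y (m + n)) + (1 / (1 - t)) ^ n * (displacement (m + n) - displacement m)"
proof (induction n)
  case 0
  then show ?case by (simp add: displacement_def)
next
  case (Suc n)
  define N where "N = m + Suc n"
  define P where "P = (1 / (1 - t)) ^ n"
  define a where "a = norm (S (y m) - y N)"
  define b where "b = norm (S (y m) - y (m + n))"
  have b_le: "b \<le> (1 - t) * a + t * (real (Suc n) * t * displacement N)"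
    unfolding a_def b_def N_def by (rule norm_S_orbit_diff_le)
  have step_le: "displacement (m + n) \<le> displacement N"
    unfolding N_def using incseq_displacement by (simp add: incseq_def)
  let ?D = "displacement N"
  have "(1 + real n * t) * (?D - displacement (m + n)) \<le> P * (?D - displacement (m + n))"
    using step_le one_plus_mult_le_inverse_power[of t n] t_pos t_less_1 unfolding P_def
    by (simp add: mult_right_mono)
  moreover have "(1 + real n * t) * ?D
      = (1 + real n * t) * displacement (m + n) + (1 + real n * t) * (?D - displacement (m + n))"
    "P * (?D - displacement m) = P * (displacement (m + n) - displacement m) + P * (?D - displacement (m + n))"
    "(1 - t) * ((1 + real (Suc n) * t) * ?D) = (1 + real n * t) * ?D - t * (real (Suc n) * t * ?D)"
    by (simp_all add: algebra_simps)
  ultimately have "(1 - t) * ((1 + real (Suc n) * t) * ?D) \<le> (1 - t) * a + P * (?D - displacement m)"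
    using Suc.IH b_le unfolding b_def P_def N_def by linarith
  then have "(1 + real (Suc n) * t) * ?D \<le> ((1 - t) * a + P * (?D - displacement m)) / (1 - t)"
    using t_less_1 by (simp add: pos_le_divide_eq mult.commute)
  also have "\<dots> = a + (1 / (1 - t)) ^ Suc n * (?D - displacement m)"
    using t_less_1 by (simp add: P_def add_divide_distrib)
  finally show ?case
    unfolding a_def N_def .
qed

lemma bounded_range_S_orbit:
  assumes "bounded (range y)"
  shows "bounded (range (\<lambda>k. S (y k)))"
proof -
  obtain R where R: "\<And>k. norm (y k) \<le> R"
    using assms by (auto simp: bounded_iff)
  have "norm (S (y (Suc k))) \<le> 2 * R / t" for k
  proof -
    have "t *\<^sub>R S (y (Suc k)) = y k - (1 - t) *\<^sub>R y (Suc k)"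
      by (subst orbit_step) simp
    then have "t * norm (S (y (Suc k))) \<le> norm (y k) + (1 - t) * norm (y (Suc k))"
      using t_pos t_less_1 by (metis abs_of_pos diff_gt_0_iff_gt norm_scaleR norm_triangle_ineq4)
    also have "\<dots> \<le> 2 * R"
    proof -
      have "(1 - t) * norm (y (Suc k)) \<le> norm (y (Suc k))"
        using t_pos t_less_1 by (intro mult_left_le_one_le) auto
      then show ?thesis
        using R[of k] R[of "Suc k"] by linarith
    qed
    finally show ?thesis
      using t_pos by (simp add: field_simps)
  qed
  then have "norm (S (y k)) \<le> max (norm (S (y 0))) (2 * R / t)" for k
    by (cases k) (auto simp: le_max_iff_disj)
  then show ?thesis
    by (auto simp: bounded_iff)
qed

lemma bounded_orbit_obtains_bound:
  assumes "bounded (range y)"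
  obtains B where "\<And>m k. norm (S (y m) - y k) \<le> B"
proof -
  have "bounded (range y \<union> range (\<lambda>k. S (y k)))"
    using assms bounded_range_S_orbit by simp
  then obtain R where "\<forall>x \<in> range y \<union> range (\<lambda>k. S (y k)). norm x \<le> R"
    unfolding bounded_iff by blast
  then have R: "\<And>k. norm (y k) \<le> R" "\<And>m. norm (S (y m)) \<le> R"
    by auto
  have "norm (S (y m) - y k) \<le> 2 * R" for m k
    using norm_triangle_ineq4[of "S (y m)" "y k"] R(1)[of k] R(2)[of m] by linarith
  then show ?thesis
    by (rule that)
qed

lemma displacement_0_le_bound:
  assumes B: "\<And>m k. norm (S (y m) - y k) \<le> B"
  shows "(1 + real n * t) * displacement 0 \<le> B"
proof -
  obtain L where lim: "displacement \<longlonglongrightarrow> L"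
    using incseq_convergent[OF incseq_displacement, of B] B unfolding displacement_def by blast
  define P where "P = (1 / (1 - t)) ^ n"
  have "(\<lambda>m. P * (displacement (m + n) - displacement m)) \<longlonglongrightarrow> P * (L - L)"
    using LIMSEQ_ignore_initial_segment[OF lim, of n] lim
    by (intro tendsto_mult tendsto_diff tendsto_const)
  moreover have "(1 + real n * t) * displacement 0 - B \<le> P * (displacement (m + n) - displacement m)" for m
  proof -
    have "displacement 0 \<le> displacement (m + n)"
      using incseq_displacement by (simp add: incseq_def)
    then have "(1 + real n * t) * displacement 0 \<le> (1 + real n * t) * displacement (m + n)"
      using t_pos by (simp add: mult_left_mono)
    then show ?thesis
      using goebel_kirk_inequality[of n m] B[of m "m + n"] unfolding P_def by linarith
  qed
  ultimately have "(1 + real n * t) * displacement 0 - B \<le> P * (L - L)"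
    by (intro LIMSEQ_le_const) auto
  then show ?thesis
    by simp
qed

theorem fixed_point_if_bounded_orbit:
  assumes "bounded (range y)"
  shows "S (y 0) = y 0"
proof -
  obtain B where B: "\<And>m k. norm (S (y m) - y k) \<le> B"
    using bounded_orbit_obtains_bound[OF assms] by blast
  have "real n * (t * displacement 0) \<le> B" for n
  proof -
    have "(1 + real n * t) * displacement 0 = displacement 0 + real n * (t * displacement 0)"
      by (simp add: algebra_simps)
    then show ?thesis
      using displacement_0_le_bound[OF B, of n] displacement_nonneg[of 0] by linarith
  qed
  then have "\<not> 0 < t * displacement 0"
    using reals_Archimedean3 not_less by blast
  then have "displacement 0 = 0"
    using t_pos displacement_nonneg[of 0] by (simp add: zero_less_mult_iff)
  then show ?thesis
    by (simp add: displacement_def)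
qed

end

text \<open>The fixed-point equation is oriented towards \<open>F x\<close>; the other orientation loops as a rewrite rule.\<close>

lemma
  fixes C :: "'a::banach set"
  assumes "closed C" "convex C" "T ` C \<subseteq> C" "nonexpansive_on C T" "0 \<le> \<alpha>" "\<alpha> < 1" "x \<in> C"
  shows resolvent_map_in: "resolvent_map C T \<alpha> x \<in> C"
    and resolvent_map_eq: "\<alpha> *\<^sub>R T (resolvent_map C T \<alpha> x) + (1 - \<alpha>) *\<^sub>R x = resolvent_map C T \<alpha> x"
proof -
  define f where "f y = \<alpha> *\<^sub>R T y + (1 - \<alpha>) *\<^sub>R x" for y
  have "\<exists>!y\<in>C. f y = y"
  proof (rule Banach_fix)
    show "complete C"
      using assms(1) by (simp add: complete_eq_closed)
    show "C \<noteq> {}" "0 \<le> \<alpha>" "\<alpha> < 1"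
      using assms(5-7) by auto
    show "f ` C \<subseteq> C"
    proof (rule image_subsetI)
      fix y
      assume "y \<in> C"
      then have "T y \<in> C"
        using assms(3) by blast
      then show "f y \<in> C"
        unfolding f_def using assms(2,5,6,7) by (simp add: convexD)
    qed
    fix y1 y2
    assume "y1 \<in> C" "y2 \<in> C"
    then have "norm (T y1 - T y2) \<le> norm (y1 - y2)"
      using assms(4) by (rule nonexpansive_onD[rotated])
    moreover have "f y1 - f y2 = \<alpha> *\<^sub>R (T y1 - T y2)"
      by (simp add: f_def algebra_simps)
    ultimately show "dist (f y1) (f y2) \<le> \<alpha> * dist y1 y2"
      using assms(5) by (simp add: dist_norm mult_left_mono)
  qed
  then have "\<exists>!y. y \<in> C \<and> \<alpha> *\<^sub>R T y + (1 - \<alpha>) *\<^sub>R x = y"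
    unfolding f_def by blast
  then have "\<exists>!y. y \<in> C \<and> y = \<alpha> *\<^sub>R T y + (1 - \<alpha>) *\<^sub>R x"
    by (simp add: eq_commute)
  from theI'[OF this] show "resolvent_map C T \<alpha> x \<in> C"
    and "\<alpha> *\<^sub>R T (resolvent_map C T \<alpha> x) + (1 - \<alpha>) *\<^sub>R x = resolvent_map C T \<alpha> x"
    unfolding resolvent_map_def by simp_all
qed

lemma nonexpansive_on_resolvent_map:
  fixes C :: "'a::banach set"
  assumes "closed C" "convex C" "T ` C \<subseteq> C" "nonexpansive_on C T" "0 \<le> \<alpha>" "\<alpha> < 1"
  shows "nonexpansive_on C (resolvent_map C T \<alpha>)"
  unfolding nonexpansive_on_def
proof (intro ballI)
  fix a b
  assume ab: "a \<in> C" "b \<in> C"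
  define u v where "u = resolvent_map C T \<alpha> a" and "v = resolvent_map C T \<alpha> b"
  have "u - v = (\<alpha> *\<^sub>R T u + (1 - \<alpha>) *\<^sub>R a) - (\<alpha> *\<^sub>R T v + (1 - \<alpha>) *\<^sub>R b)"
    using resolvent_map_eq[OF assms ab(1)] resolvent_map_eq[OF assms ab(2)]
    unfolding u_def[symmetric] v_def[symmetric] by (simp only:)
  also have "\<dots> = \<alpha> *\<^sub>R (T u - T v) + (1 - \<alpha>) *\<^sub>R (a - b)"
    by (simp add: algebra_simps)
  finally have "norm (u - v) \<le> norm (\<alpha> *\<^sub>R (T u - T v)) + norm ((1 - \<alpha>) *\<^sub>R (a - b))"
    by (metis norm_triangle_ineq)
  also have "\<dots> = \<alpha> * norm (T u - T v) + (1 - \<alpha>) * norm (a - b)"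
    using assms(5,6) by simp
  also have "\<dots> \<le> \<alpha> * norm (u - v) + (1 - \<alpha>) * norm (a - b)"
    using assms(4,5) resolvent_map_in[OF assms ab(1)] resolvent_map_in[OF assms ab(2)]
    unfolding u_def[symmetric] v_def[symmetric] by (simp add: mult_left_mono nonexpansive_onD)
  finally have "(1 - \<alpha>) * norm (u - v) \<le> (1 - \<alpha>) * norm (a - b)"
    by (simp add: algebra_simps)
  then show "norm (u - v) \<le> norm (a - b)"
    using assms(6) by simp
qed

theorem corollary3p4:
  fixes C D :: "'a::banach set" and T :: "'a \<Rightarrow> 'a" and \<alpha> :: real
  assumes "closed C" and "convex C"
    and "T ` C \<subseteq> C"
    and "nonexpansive_on C T"
    and "0 < \<alpha>" and "\<alpha> < 1"
    and "D \<subseteq> C" and "D \<noteq> {}" and "bounded D"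
    and "resolvent_map C T \<alpha> ` D = D"
  shows "\<exists>x\<in>C. T x = x"
proof -
  let ?F = "resolvent_map C T \<alpha>"
  note resolvent = assms(1-4) less_imp_le[OF assms(5)] assms(6)
  obtain x0 where "x0 \<in> D"
    using assms(8) by blast
  then obtain y where y: "\<And>k. y k \<in> D" "\<And>k. ?F (y (Suc k)) = y k"
    using surj_on_backward_orbit[OF assms(10)] by metis
  have yC: "y k \<in> C" for k
    using y(1) assms(7) by blast
  interpret averaged_backward_orbit C "T \<circ> ?F" \<alpha> y
  proof
    show "nonexpansive_on C (T \<circ> ?F)"
      using nonexpansive_on_resolvent_map[OF resolvent] resolvent_map_in[OF resolvent] assms(4)
      by (intro nonexpansive_on_comp) auto
    show "y k = (1 - \<alpha>) *\<^sub>R y (Suc k) + \<alpha> *\<^sub>R (T \<circ> ?F) (y (Suc k))" for k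
      using resolvent_map_eq[OF resolvent yC[of "Suc k"]] y(2)[of k] by (simp add: algebra_simps)
  qed (use assms(5,6) yC in auto)
  have "bounded (range y)"
    using y(1) by (blast intro: bounded_subset[OF assms(9)])
  then have fixed: "T (?F (y 0)) = y 0"
    using fixed_point_if_bounded_orbit by simp
  then have "?F (y 0) = y 0"
    using resolvent_map_eq[OF resolvent yC[of 0]] by (simp flip: scaleR_add_left)
  then show ?thesis
    using fixed yC by metis
qed

end
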